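(* Let $V$ be a finite-dimensional vector space over a field $\mathbb K$ of characteristic $\neq 2$, let $\mathcal S\subseteq V$, and let $\mathcal H\subset V$ be a linear hyperplane. Suppose that $\mathcal S'=\mathcal S\cap\mathcal H$ is a perfect subset of $\mathcal H$ and that $\mathcal S\setminus\mathcal S'$ spans $V$. Then $\mathcal S$ is perfect in $V$.
   Context: A subset $\mathcal P$ of a vector space $W$ of finite dimension $n$ over a field of characteristic $\neq2$ is perfect (in $W$) if $\{v\otimes v\}_{v\in\mathcal P}$ spans the $\binom{n+1}{2}$-dimensional space of all symmetric tensors in $W\otimes W$. *)

theory Defs
  imports Main "HOL.Vector_Spaces" "HOL-Library.Function_Algebras"
begin

text \<open>Model: the finite-dimensional K-vector space V is K^n, realised as functions
  'n \<Rightarrow> 'a with 'n a finite index type; V \<otimes> V is realised as K^(n\<times>n),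
  i.e. functions ('n \<times> 'n) \<Rightarrow> 'a, with v \<otimes> w = (\<lambda>(i,j). v i * w j).\<close>

definition fscale :: "'a::field \<Rightarrow> ('i \<Rightarrow> 'a) \<Rightarrow> ('i \<Rightarrow> 'a)" where
  "fscale c v = (\<lambda>i. c * v i)"

definition tensor :: "('n \<Rightarrow> 'a::field) \<Rightarrow> ('n \<Rightarrow> 'a) \<Rightarrow> ('n \<times> 'n \<Rightarrow> 'a)" where
  "tensor v w = (\<lambda>(i, j). v i * w j)"

definition sym_tensors :: "('n \<Rightarrow> 'a::field) set \<Rightarrow> ('n \<times> 'n \<Rightarrow> 'a) set" where
  "sym_tensors W =
     {T \<in> module.span fscale {tensor w w' | w w'. w \<in> W \<and> w' \<in> W}.
        \<forall>i j. T (i, j) = T (j, i)}"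

definition perfect_in :: "('n \<Rightarrow> 'a::field) set \<Rightarrow> ('n \<Rightarrow> 'a) set \<Rightarrow> bool" where
  "perfect_in W P \<longleftrightarrow> P \<subseteq> W \<and> module.span fscale ((\<lambda>v. tensor v v) ` P) = sym_tensors W"

definition hyperplane :: "('n::finite \<Rightarrow> 'a::field) set \<Rightarrow> bool" where
  "hyperplane H \<longleftrightarrow> module.subspace fscale H \<and> vector_space.dim fscale H = card (UNIV :: 'n set) - 1"

end

theory Submission
  imports Defs
begin

text \<open>Pick \<open>u \<in> S \<setminus> H\<close>, so that every vector is \<open>h + k u\<close> with \<open>h \<in> H\<close>, and let \<open>M\<close> be the
  span of the squares \<open>s \<otimes> s\<close>, \<open>s \<in> S\<close>. By perfectness of \<open>S \<inter> H\<close>, \<open>M\<close> contains every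
  \<open>h \<otimes> h\<close> with \<open>h \<in> H\<close>, and it contains \<open>u \<otimes> u\<close>. For \<open>s = h + k u \<in> S \<setminus> H\<close> we have
  \<open>k \<noteq> 0\<close> and \<open>s \<otimes> s - h \<otimes> h - k\<^sup>2 u \<otimes> u = k (u \<otimes> h + h \<otimes> u)\<close>, so \<open>u \<otimes> s + s \<otimes> u \<in> M\<close>.
  As \<open>x \<mapsto> u \<otimes> x + x \<otimes> u\<close> is linear and \<open>S \<setminus> H\<close> spans \<open>V\<close>, this holds for all \<open>x\<close>, and
  expanding \<open>(h + k u) \<otimes> (h + k u)\<close> shows that \<open>M\<close> contains all squares. Polarization
  then gives all \<open>a \<otimes> b + b \<otimes> a\<close>, which span the symmetric tensors since \<open>2 \<noteq> 0\<close>.\<close>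

interpretation fun_vs: vector_space "fscale :: 'a::field \<Rightarrow> ('i \<Rightarrow> 'a) \<Rightarrow> _"
  by unfold_locales (simp_all add: fscale_def fun_eq_iff algebra_simps)

lemma sum_fun_apply: "(sum f A) x = sum (\<lambda>a. f a x) A"
  by (induction A rule: infinite_finite_induct) auto

definition basis_fun :: "'i \<Rightarrow> 'i \<Rightarrow> 'a::field" where
  "basis_fun i = (\<lambda>j. if j = i then 1 else 0)"

lemma inj_basis_fun: "inj basis_fun"
  by (auto simp: inj_def basis_fun_def fun_eq_iff)

lemma fun_eq_sum_basis_fun: "x = (\<Sum>j\<in>UNIV. fscale (x j) (basis_fun j))"
  for x :: "'i::finite \<Rightarrow> 'a::field"
  by (rule ext) (simp add: sum_fun_apply fscale_def basis_fun_def if_distrib[where f="times _"]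
      cong: if_cong)

interpretation fun_fdvs:
  finite_dimensional_vector_space "fscale :: 'a::field \<Rightarrow> ('i::finite \<Rightarrow> 'a) \<Rightarrow> _" "range basis_fun"
proof unfold_locales
  show "fun_vs.independent (range (basis_fun :: 'i \<Rightarrow> 'i \<Rightarrow> 'a))"
  proof (rule fun_vs.independent_if_scalars_zero)
    fix c :: "('i \<Rightarrow> 'a) \<Rightarrow> 'a" and v
    assume zero: "(\<Sum>v\<in>range basis_fun. fscale (c v) v) = 0"
      and "v \<in> range (basis_fun :: 'i \<Rightarrow> 'i \<Rightarrow> 'a)"
    then obtain i where i: "v = basis_fun i" by auto
    have "(\<Sum>v\<in>range basis_fun. fscale (c v) v) i
          = (\<Sum>j\<in>UNIV. fscale (c (basis_fun j)) (basis_fun j)) i"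
      by (simp add: sum.reindex[OF inj_basis_fun])
    also have "\<dots> = c (basis_fun i)"
      by (simp add: sum_fun_apply fscale_def basis_fun_def if_distrib[where f="times _"]
          cong: if_cong)
    finally show "c v = 0" using zero i by simp
  qed simp
  show "fun_vs.span (range (basis_fun :: 'i \<Rightarrow> 'i \<Rightarrow> 'a)) = UNIV"
  proof (intro set_eqI iffI UNIV_I)
    fix x :: "'i \<Rightarrow> 'a"
    have "(\<Sum>j\<in>UNIV. fscale (x j) (basis_fun j)) \<in> fun_vs.span (range basis_fun)"
      by (intro fun_vs.span_sum fun_vs.span_scale fun_vs.span_base) auto
    then show "x \<in> fun_vs.span (range basis_fun)"
      by (subst fun_eq_sum_basis_fun)
  qed
qed simp

lemma card_range_basis_fun:
  "card (range (basis_fun :: 'i::finite \<Rightarrow> 'i \<Rightarrow> 'a::field)) = card (UNIV :: 'i set)"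
  by (simp add: card_image[OF inj_basis_fun])

lemma span_insert_eq_UNIV_if_hyperplane:
  fixes H :: "('n::finite \<Rightarrow> 'a::field) set"
  assumes "hyperplane H" and "u \<notin> H"
  shows "fun_vs.span (insert u H) = UNIV"
proof -
  have H: "fun_vs.subspace H" and dim: "fun_vs.dim H = card (UNIV :: 'n set) - 1"
    using assms(1) by (auto simp: hyperplane_def)
  have "fun_vs.dim (insert u H) = card (UNIV :: 'n set)"
    using assms(2) H dim finite_UNIV_card_ge_0[where 'a='n]
    by (simp add: fun_fdvs.dim_insert fun_vs.span_eq_iff[THEN iffD2])
  then show ?thesis
    using fun_fdvs.dim_eq_full[unfolded fun_fdvs.dimension_def] card_range_basis_fun by metis
qed

lemma hyperplane_decomp:
  fixes H :: "('n::finite \<Rightarrow> 'a::field) set"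
  assumes "hyperplane H" and "u \<notin> H"
  obtains h k where "h \<in> H" and "x = h + fscale k u"
proof -
  have H: "fun_vs.subspace H"
    using assms(1) by (simp add: hyperplane_def)
  have "x \<in> fun_vs.span (insert u H)"
    using span_insert_eq_UNIV_if_hyperplane[OF assms] by simp
  then obtain k where "x - fscale k u \<in> fun_vs.span H"
    by (auto simp: fun_vs.span_breakdown_eq)
  then have "x - fscale k u \<in> H"
    using fun_vs.span_eq_iff[THEN iffD2, OF H] by simp
  then show thesis
    by (intro that[of "x - fscale k u" k]) simp_all
qed

lemma tensor_square_add_scale:
  "tensor (h + fscale k u) (h + fscale k u)
     = tensor h h + fscale k (tensor u h + tensor h u) + fscale (k * k) (tensor u u)"
  by (simp add: tensor_def fscale_def fun_eq_iff algebra_simps)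

lemma tensor_polarization:
  "tensor a b + tensor b a = tensor (a + b) (a + b) - tensor a a - tensor b b"
  by (simp add: tensor_def fun_eq_iff algebra_simps)

lemma subspace_symmetric_tensors:
  "fun_vs.subspace {T :: 'n \<times> 'n \<Rightarrow> 'a::field. \<forall>i j. T (i, j) = T (j, i)}"
  by (auto simp: fun_vs.subspace_def fscale_def)

lemma subspace_sym_tensors: "fun_vs.subspace (sym_tensors W)"
proof -
  have "sym_tensors W = fun_vs.span {tensor w w' | w w'. w \<in> W \<and> w' \<in> W}
                          \<inter> {T. \<forall>i j. T (i, j) = T (j, i)}"
    unfolding sym_tensors_def by blast
  then show ?thesis
    using fun_vs.subspace_inter[OF fun_vs.subspace_span subspace_symmetric_tensors] by simp
qed

lemma tensor_square_mem_sym_tensors: "w \<in> W \<Longrightarrow> tensor w w \<in> sym_tensors W"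
  unfolding sym_tensors_def by (auto intro!: fun_vs.span_base simp: tensor_def mult.commute)

lemma symmetric_tensor_expansion:
  fixes T :: "'n::finite \<times> 'n \<Rightarrow> 'a::field"
  assumes "(2::'a) \<noteq> 0" and "\<And>i j. T (i, j) = T (j, i)"
  shows "T = (\<Sum>i\<in>UNIV. \<Sum>j\<in>UNIV. fscale (T (i, j) / 2)
               (tensor (basis_fun i) (basis_fun j) + tensor (basis_fun j) (basis_fun i)))"
proof (rule ext, clarify)
  fix a b :: 'n
  have entry: "fscale c (tensor (basis_fun i) (basis_fun j) + tensor (basis_fun j) (basis_fun i)) (a, b)
      = (if j = b then if i = a then c else 0 else 0) + (if j = a then if i = b then c else 0 else 0)"
    for c :: 'a and i j
    by (simp add: fscale_def tensor_def basis_fun_def distrib_left)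
  have "(\<Sum>i\<in>UNIV. \<Sum>j\<in>UNIV. fscale (T (i, j) / 2)
          (tensor (basis_fun i) (basis_fun j) + tensor (basis_fun j) (basis_fun i))) (a, b)
      = T (a, b) / 2 + T (b, a) / 2"
    unfolding sum_fun_apply entry by (simp add: sum.distrib)
  also have "\<dots> = T (a, b)"
    using assms(1) assms(2)[of b a] by (simp add: field_simps)
  finally show "T (a, b) = (\<Sum>i\<in>UNIV. \<Sum>j\<in>UNIV. fscale (T (i, j) / 2)
          (tensor (basis_fun i) (basis_fun j) + tensor (basis_fun j) (basis_fun i))) (a, b)"
    by (rule sym)
qed

lemma perfect_in_UNIV_if_squares_in_span:
  fixes S :: "('n::finite \<Rightarrow> 'a::field) set"
  assumes "(2::'a) \<noteq> 0"
    and squares: "\<And>x. tensor x x \<in> fun_vs.span ((\<lambda>v. tensor v v) ` S)"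
  shows "perfect_in UNIV S"
  unfolding perfect_in_def
proof (intro conjI subset_UNIV equalityI)
  show "fun_vs.span ((\<lambda>v. tensor v v) ` S) \<subseteq> sym_tensors UNIV"
    by (intro fun_vs.span_minimal subspace_sym_tensors image_subsetI tensor_square_mem_sym_tensors)
      simp
  show "sym_tensors UNIV \<subseteq> fun_vs.span ((\<lambda>v. tensor v v) ` S)"
  proof
    fix T assume "T \<in> sym_tensors (UNIV :: ('n \<Rightarrow> 'a) set)"
    then have "\<And>i j. T (i, j) = T (j, i)"
      by (simp add: sym_tensors_def)
    note T_eq = symmetric_tensor_expansion[of T, OF assms(1) this]
    have "tensor a b + tensor b a \<in> fun_vs.span ((\<lambda>v. tensor v v) ` S)" for a b
      unfolding tensor_polarization using squares by (intro fun_vs.span_diff)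
    then show "T \<in> fun_vs.span ((\<lambda>v. tensor v v) ` S)"
      by (subst T_eq) (intro fun_vs.span_sum fun_vs.span_scale)
  qed
qed

lemma subspace_symmetrized_preimage:
  assumes "fun_vs.subspace M"
  shows "fun_vs.subspace {x. tensor u x + tensor x u \<in> M}"
proof -
  have "tensor u 0 + tensor 0 u = 0"
    by (simp add: tensor_def fun_eq_iff)
  moreover have "tensor u (x + y) + tensor (x + y) u
                 = (tensor u x + tensor x u) + (tensor u y + tensor y u)" for x y
    by (simp add: tensor_def fun_eq_iff algebra_simps)
  moreover have "tensor u (fscale c x) + tensor (fscale c x) u
                 = fscale c (tensor u x + tensor x u)" for c x
    by (simp add: tensor_def fscale_def fun_eq_iff algebra_simps)
  ultimately show ?thesis
    using fun_vs.subspace_0[OF assms] fun_vs.subspace_add[OF assms] fun_vs.subspace_scale[OF assms]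
    by (simp add: fun_vs.subspace_def)
qed

lemma symmetrized_mem_if_square_mem:
  assumes M: "fun_vs.subspace M" and "k \<noteq> 0"
    and "tensor h h \<in> M" and "tensor u u \<in> M"
    and "tensor (h + fscale k u) (h + fscale k u) \<in> M"
  shows "tensor u (h + fscale k u) + tensor (h + fscale k u) u \<in> M"
proof -
  have "fscale k (tensor u h + tensor h u)
        = tensor (h + fscale k u) (h + fscale k u) - tensor h h - fscale (k * k) (tensor u u)"
    by (simp add: tensor_square_add_scale)
  then have "fscale k (tensor u h + tensor h u) \<in> M"
    using assms by (simp add: fun_vs.subspace_diff fun_vs.subspace_scale)
  then have "fscale (inverse k) (fscale k (tensor u h + tensor h u)) \<in> M"
    using M fun_vs.subspace_scale by blast
  then have "tensor u h + tensor h u \<in> M"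
    using \<open>k \<noteq> 0\<close> by (simp add: fun_vs.scale_scale)
  then have "(tensor u h + tensor h u) + fscale (2 * k) (tensor u u) \<in> M"
    using assms by (simp add: fun_vs.subspace_add fun_vs.subspace_scale)
  moreover have "(tensor u h + tensor h u) + fscale (2 * k) (tensor u u)
                 = tensor u (h + fscale k u) + tensor (h + fscale k u) u"
    by (simp add: tensor_def fscale_def fun_eq_iff algebra_simps)
  ultimately show ?thesis by simp
qed

lemma tensor_square_mem_if_hyperplane:
  fixes H T :: "('n::finite \<Rightarrow> 'a::field) set"
  assumes M: "fun_vs.subspace M" and hyp: "hyperplane H"
    and T: "T \<inter> H = {}" "fun_vs.span T = UNIV"
    and sq_H: "\<And>h. h \<in> H \<Longrightarrow> tensor h h \<in> M"
    and sq_T: "\<And>t. t \<in> T \<Longrightarrow> tensor t t \<in> M"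
  shows "tensor x x \<in> M"
proof -
  have "T \<noteq> {}"
  proof
    assume "T = {}"
    then have "(\<lambda>_. 1) \<in> fun_vs.span ({} :: ('n \<Rightarrow> 'a) set)"
      using T(2) by simp
    then show False
      by (simp add: fun_eq_iff)
  qed
  then obtain u where "u \<in> T"
    by blast
  then have u: "u \<notin> H" "tensor u u \<in> M"
    using T sq_T by auto
  have "T \<subseteq> {y. tensor u y + tensor y u \<in> M}"
  proof
    fix t assume t: "t \<in> T"
    obtain h k where h: "h \<in> H" and t_eq: "t = h + fscale k u"
      using hyperplane_decomp[OF hyp u(1)] .
    have "k \<noteq> 0"
      using t h t_eq T(1) by (auto simp: fscale_def zero_fun_def[symmetric])
    then show "t \<in> {y. tensor u y + tensor y u \<in> M}"
      using symmetrized_mem_if_square_mem[OF M _ sq_H[OF h] u(2)] sq_T[OF t] t_eq by simp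
  qed
  then have symmetrized: "tensor u y + tensor y u \<in> M" for y
    using fun_vs.span_minimal[OF _ subspace_symmetrized_preimage[OF M]] T(2) by blast
  obtain h k where h: "h \<in> H" and x_eq: "x = h + fscale k u"
    using hyperplane_decomp[OF hyp u(1)] .
  show ?thesis
    unfolding x_eq tensor_square_add_scale
    using M sq_H[OF h] symmetrized[of h] u(2)
    by (simp add: fun_vs.subspace_add fun_vs.subspace_scale)
qed

theorem lemma2p1:
  fixes S H :: "('n::finite \<Rightarrow> 'a::field) set"
  assumes char: "(2::'a) \<noteq> 0"
    and hyp: "hyperplane H"
    and perf: "perfect_in H (S \<inter> H)"
    and spans: "module.span fscale (S - (S \<inter> H)) = UNIV"
  shows "perfect_in (UNIV :: ('n \<Rightarrow> 'a) set) S"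
proof -
  define M where "M = fun_vs.span ((\<lambda>v. tensor v v) ` S)"
  have sq_S: "tensor s s \<in> M" if "s \<in> S" for s
    unfolding M_def using that by (auto intro: fun_vs.span_base)
  have sq_H: "tensor h h \<in> M" if "h \<in> H" for h
  proof -
    have "tensor h h \<in> fun_vs.span ((\<lambda>v. tensor v v) ` (S \<inter> H))"
      using perf tensor_square_mem_sym_tensors[OF that] by (simp add: perfect_in_def)
    also have "\<dots> \<subseteq> M"
      unfolding M_def by (intro fun_vs.span_mono) auto
    finally show ?thesis .
  qed
  have "tensor x x \<in> M" for x
    using tensor_square_mem_if_hyperplane[OF _ hyp _ spans] sq_H sq_S unfolding M_def by auto
  then show ?thesis
    unfolding M_def by (rule perfect_in_UNIV_if_squares_in_span[OF char])
qed

end
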